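(* Let $q\ge5$ be a prime power with $q\not\equiv0\pmod3$, and let $\mathfrak{A}$ be the null polarity $P(x_0,x_1,x_2,x_3)\mathfrak{A}=\boldsymbol{\pi}(x_3,-3x_2,3x_1,-x_0)$ of $\mathrm{PG}(3,q)$. Let $\ell$ be a line of $\mathrm{PG}(3,q)$ and $\ell'=\ell\mathfrak{A}$. Then the subgroup of $G_q$ fixing $\ell$ is also the subgroup of $G_q$ fixing $\ell'$.
   Context: $\boldsymbol{\pi}(c_0,c_1,c_2,c_3)$ denotes the plane $c_0x_0+c_1x_1+c_2x_2+c_3x_3=0$. The twisted cubic is $\mathcal{C}=\{P(t^3,t^2,t,1):t\in\mathbb{F}_q\}\cup\{P(1,0,0,0)\}$ and $G_q$ is the group of projectivities of $\mathrm{PG}(3,q)$ mapping $\mathcal{C}$ to itself. For a line $\ell$ through distinct points $P_1,P_2$, $\ell\mathfrak{A}$ is the line $P_1\mathfrak{A}\cap P_2\mathfrak{A}$. A subgroup fixes a line if each of its elements maps the line onto itself. *)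

theory Defs
  imports "HOL-Analysis.Analysis" "HOL-Computational_Algebra.Primes"
begin

text \<open>Coordinate x_0 is component 1, x_1 is component 2, x_2 is component 3, x_3 is component 4.
  A point P(v) is represented by the nonzero vector v (up to nonzero scalars); a set of
  points (line, plane, curve) is represented by the set of all nonzero vectors representing
  its points, which is closed under nonzero scalar multiples.\<close>

definition vec4 :: "'a::zero \<Rightarrow> 'a \<Rightarrow> 'a \<Rightarrow> 'a \<Rightarrow> 'a ^ 4" where
  "vec4 a b c d = (\<chi> i. if i = 1 then a else if i = 2 then b else if i = 3 then c else d)"

definition dotp :: "'a::comm_ring_1 ^ 4 \<Rightarrow> 'a ^ 4 \<Rightarrow> 'a" where
  "dotp c x = (\<Sum>i\<in>UNIV. c $ i * x $ i)"

definition plane :: "'a::field ^ 4 \<Rightarrow> ('a ^ 4) set" where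
  "plane c = {x. x \<noteq> 0 \<and> dotp c x = 0}"

text \<open>Two vectors represent distinct points (i.e. are linearly independent).\<close>
definition indep2 :: "'a::field ^ 4 \<Rightarrow> 'a ^ 4 \<Rightarrow> bool" where
  "indep2 u w \<longleftrightarrow> (\<forall>a b. a *s u + b *s w = 0 \<longrightarrow> a = 0 \<and> b = 0)"

definition line_through :: "'a::field ^ 4 \<Rightarrow> 'a ^ 4 \<Rightarrow> ('a ^ 4) set" where
  "line_through u w = {a *s u + b *s w | a b. a \<noteq> 0 \<or> b \<noteq> 0}"

text \<open>The null polarity: P(x_0,x_1,x_2,x_3) is mapped to pi(x_3,-3x_2,3x_1,-x_0);
  we record the coefficient vector of the image plane.\<close>
definition nullpol :: "'a::field ^ 4 \<Rightarrow> 'a ^ 4" where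
  "nullpol x = vec4 (x $ 4) (- 3 * x $ 3) (3 * x $ 2) (- (x $ 1))"

text \<open>Image of the line P(u)P(w) under the polarity: intersection of the two image planes.\<close>
definition polar_line :: "'a::field ^ 4 \<Rightarrow> 'a ^ 4 \<Rightarrow> ('a ^ 4) set" where
  "polar_line u w = plane (nullpol u) \<inter> plane (nullpol w)"

definition twisted_cubic :: "('a::field ^ 4) set" where
  "twisted_cubic = {c *s vec4 (t ^ 3) (t ^ 2) t 1 | c t. c \<noteq> 0}
                   \<union> {c *s vec4 1 0 0 0 | c. c \<noteq> 0}"

definition proj_fixes :: "'a::field ^ 4 ^ 4 \<Rightarrow> ('a ^ 4) set \<Rightarrow> bool" where
  "proj_fixes M S \<longleftrightarrow> (\<lambda>x. M *v x) ` S = S"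

text \<open>G_q, as the set of nonsingular matrices inducing projectivities that preserve the
  twisted cubic (each projectivity corresponds to the class of its nonzero scalar multiples).\<close>
definition Gq :: "('a::field ^ 4 ^ 4) set" where
  "Gq = {M. invertible M \<and> proj_fixes M twisted_cubic}"

end

theory Submission
  imports Defs "HOL-Computational_Algebra.Polynomial"
begin

(* The null polarity is induced by the alternating form
   B(x, y) = x_3 y_0 - 3 x_2 y_1 + 3 x_1 y_2 - x_0 y_3, so the polar line of l is its
   B-orthogonal, and l is in turn the B-orthogonal of its polar line because B is nondegenerate
   when 3 <> 0.  Every element of G_q is a similitude of B: composed with the lift of a suitable
   element of PGL(2, q) it fixes the points P(1,0,0,0) and P(0,0,0,1) of the cubic, and a
   projectivity preserving the cubic and fixing these two points is diag(a, b, c, d) with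
   b c = a d.  This is where q >= 5 is needed: the entries are read off cubic polynomials that
   vanish on all of GF(q)^*.  A similitude maps l into l iff it maps the B-orthogonal of l into
   itself, and being injective on finite point sets it then fixes both lines. *)

lemma vec4_nth [simp]:
  "vec4 a b c d $ 1 = a" "vec4 a b c d $ 2 = b" "vec4 a b c d $ 3 = c" "vec4 a b c d $ 4 = d"
  by (simp_all add: vec4_def)

lemma vec4_eq_iff: "v = w \<longleftrightarrow> v$1 = w$1 \<and> v$2 = w$2 \<and> v$3 = w$3 \<and> v$4 = w$4"
  for v w :: "'a^4"
  by (simp add: vec_eq_iff forall_4)

lemma matrix_vector_mult_4:
  "(M *v x) $ i = M$i$1 * x$1 + M$i$2 * x$2 + M$i$3 * x$3 + M$i$4 * x$4"
  for M :: "'a::comm_ring_1^4^4"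
  by (simp add: matrix_vector_mult_def sum_4)

lemma matrix_matrix_mult_4:
  "(M ** N) $ i $ j = M$i$1 * N$1$j + M$i$2 * N$2$j + M$i$3 * N$3$j + M$i$4 * N$4$j"
  for M N :: "'a::comm_ring_1^4^4"
  by (simp add: matrix_matrix_mult_def sum_4)

lemma invertible_matrix_vector_mult_eq_0_iff:
  fixes M :: "'a::field^'n^'n"
  assumes "invertible M"
  shows "M *v x = 0 \<longleftrightarrow> x = 0"
  using inj_matrix_vector_mult[OF assms] by (metis injD matrix_vector_mult_0_right)

lemma of_nat_card_eq_0: "of_nat CARD('a::{ring_1,finite}) = (0::'a)"
proof -
  have "bij (\<lambda>x::'a. x + 1)"
    by (rule bij_betw_byWitness[where f' = "\<lambda>x. x - 1"]) auto
  then have "(\<Sum>x\<in>UNIV. x + 1) = (\<Sum>x\<in>UNIV. x :: 'a)"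
    by (rule sum.reindex_bij_betw)
  then show ?thesis
    by (simp add: sum.distrib)
qed

lemma three_neq_zero_if_card_not_dvd:
  assumes "CARD('a::{field,finite}) mod 3 \<noteq> 0"
  shows "(3::'a) \<noteq> 0"
proof
  assume "(3::'a) = 0"
  then have "CHAR('a) dvd 3"
    using of_nat_eq_0_iff_char_dvd[of 3, where ?'a = 'a] by simp
  then have "CHAR('a) = 3"
    using prime_nat_iff[of 3] by auto
  moreover have "CHAR('a) dvd CARD('a)"
    using of_nat_card_eq_0 of_nat_eq_0_iff_char_dvd by blast
  ultimately show False
    using assms by auto
qed

lemma sum_mult_axis: "(\<Sum>l\<in>UNIV. v$l * axis i x $ l) = v$i * x"
  for v :: "'a::semiring_0^'n"
  by (simp add: axis_def if_distrib[where f="times _"] sum.If_cases)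

lemma nonzero_minor_if_independent:
  fixes a b :: "'a::field^'n"
  assumes indep: "\<And>\<alpha> \<beta>. \<alpha> *s a + \<beta> *s b = 0 \<Longrightarrow> \<alpha> = 0 \<and> \<beta> = 0"
  obtains i j where "a$i * b$j - a$j * b$i \<noteq> 0"
proof -
  have "a \<noteq> 0"
    using indep[of 1 0] by auto
  then obtain i where ai: "a$i \<noteq> 0"
    by (auto simp: vec_eq_iff)
  have "b$i *s a + (- a$i) *s b \<noteq> 0"
    using indep[of "b$i" "- a$i"] ai by auto
  then obtain j where "b$i * a$j - a$i * b$j \<noteq> 0"
    by (auto simp: vec_eq_iff)
  then show ?thesis
    by (intro that[of i j]) (simp add: algebra_simps)
qed

lemma in_span_pair_if_annihilator_le:
  fixes a b c :: "'a::field^'n"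
  assumes indep: "\<And>\<alpha> \<beta>. \<alpha> *s a + \<beta> *s b = 0 \<Longrightarrow> \<alpha> = 0 \<and> \<beta> = 0"
    and ann: "\<And>y. (\<Sum>l\<in>UNIV. a$l * y$l) = 0 \<Longrightarrow> (\<Sum>l\<in>UNIV. b$l * y$l) = 0
                \<Longrightarrow> (\<Sum>l\<in>UNIV. c$l * y$l) = 0"
  shows "\<exists>\<alpha> \<beta>. c = \<alpha> *s a + \<beta> *s b"
proof -
  obtain i j where p: "a$i * b$j - a$j * b$i \<noteq> 0" (is "?p \<noteq> 0")
    using nonzero_minor_if_independent indep by blast
  have sum_axes: "(\<Sum>l\<in>UNIV. v$l * (axis i r + axis j s + axis k t)$l) = v$i * r + v$j * s + v$k * t"
    for v :: "'a^'n" and r s t k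
    by (simp add: distrib_left sum.distrib sum_mult_axis)
  define \<alpha> where "\<alpha> = (c$i * b$j - c$j * b$i) / ?p"
  define \<beta> where "\<beta> = (a$i * c$j - a$j * c$i) / ?p"
  have "c$k = \<alpha> * a$k + \<beta> * b$k" for k
  proof -
    \<comment> \<open>a generalised cross product of a and b, hence orthogonal to both\<close>
    define y where "y = axis i (a$j * b$k - a$k * b$j) + axis j (a$k * b$i - a$i * b$k) + axis k ?p"
    have "(\<Sum>l\<in>UNIV. c$l * y$l) = 0"
      by (rule ann) (simp_all only: y_def sum_axes, algebra+)
    then have "c$k * ?p = (c$i * b$j - c$j * b$i) * a$k + (a$i * c$j - a$j * c$i) * b$k"
      unfolding y_def sum_axes by algebra
    with p have "c$k = ((c$i * b$j - c$j * b$i) * a$k + (a$i * c$j - a$j * c$i) * b$k) / ?p"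
      by (simp add: eq_divide_eq)
    then show ?thesis
      by (simp add: \<alpha>_def \<beta>_def add_divide_distrib)
  qed
  then show ?thesis
    by (auto simp: vec_eq_iff)
qed

lemma poly_eq_0_if_vanishes_off_0:
  fixes p :: "'a::{field,finite} poly"
  assumes "degree p + 1 < CARD('a)" and "\<And>t. t \<noteq> 0 \<Longrightarrow> poly p t = 0"
  shows "p = 0"
proof (rule ccontr)
  assume "p \<noteq> 0"
  have "CARD('a) - 1 = card (UNIV - {0::'a})"
    by (simp add: card_Diff_subset)
  also have "\<dots> \<le> card {t. poly p t = 0}"
    using assms(2) by (intro card_mono) auto
  also have "\<dots> \<le> degree p"
    using card_poly_roots_bound[OF \<open>p \<noteq> 0\<close>] .
  finally show False
    using assms(1) by linarith
qed

lemma cubic_coeffs_eq_0_if_vanishes_off_0: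
  fixes k0 k1 k2 k3 :: "'a::{field,finite}"
  assumes "CARD('a) \<ge> 5" and "\<And>t. t \<noteq> 0 \<Longrightarrow> k0 + k1*t + k2*t^2 + k3*t^3 = 0"
  shows "k0 = 0 \<and> k1 = 0 \<and> k2 = 0 \<and> k3 = 0"
proof -
  have "[:k0, k1, k2, k3:] = 0"
  proof (rule poly_eq_0_if_vanishes_off_0)
    have "degree [:k0, k1, k2, k3:] \<le> 3"
      using degree_pCons_le[of k0 "[:k1, k2, k3:]"] degree_pCons_le[of k1 "[:k2, k3:]"]
        degree_pCons_le[of k2 "[:k3:]"]
      by simp
    with assms(1) show "degree [:k0, k1, k2, k3:] + 1 < CARD('a)"
      by linarith
    have "poly [:k0, k1, k2, k3:] t = k0 + k1*t + k2*t^2 + k3*t^3" for t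
      by (simp add: algebra_simps power2_eq_square power3_eq_cube)
    with assms(2) show "poly [:k0, k1, k2, k3:] t = 0" if "t \<noteq> 0" for t
      using that by metis
  qed
  then show ?thesis
    by simp
qed

definition polar_form :: "'a::field^4 \<Rightarrow> 'a^4 \<Rightarrow> 'a" where
  "polar_form x y = dotp (nullpol x) y"

lemma polar_form_4: "polar_form x y = x$4 * y$1 - 3 * x$3 * y$2 + 3 * x$2 * y$3 - x$1 * y$4"
  by (simp add: polar_form_def dotp_def sum_4 nullpol_def algebra_simps)

lemma polar_form_linear_left:
  "polar_form (a *s u + b *s w) y = a * polar_form u y + b * polar_form w y"
  by (simp add: polar_form_4 algebra_simps)

lemma polar_form_zero_right [simp]: "polar_form x 0 = 0"
  by (simp add: polar_form_4)

definition symplectic_similitude :: "'a::field^4^4 \<Rightarrow> bool" where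
  "symplectic_similitude M \<longleftrightarrow>
     (\<exists>\<mu>. \<forall>x y. polar_form (M *v x) (M *v y) = \<mu> * polar_form x y)"

lemma symplectic_similitude_diagonal:
  assumes "\<beta> * \<gamma> = \<alpha> * \<delta>"
    and "\<And>x. M *v x = vec4 (\<alpha> * x$1) (\<beta> * x$2) (\<gamma> * x$3) (\<delta> * x$4)"
  shows "symplectic_similitude M"
  unfolding symplectic_similitude_def
proof (intro exI allI)
  fix x y
  show "polar_form (M *v x) (M *v y) = (\<alpha> * \<delta>) * polar_form x y"
    unfolding assms(2) polar_form_4 using assms(1) by simp algebra
qed

lemma symplectic_similitude_cancel_left:
  assumes "symplectic_similitude (N ** M)"
    and "\<And>x y. polar_form (N *v x) (N *v y) = \<kappa> * polar_form x y" and "\<kappa> \<noteq> 0"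
  shows "symplectic_similitude M"
proof -
  obtain \<mu> where \<mu>: "\<And>x y. polar_form ((N ** M) *v x) ((N ** M) *v y) = \<mu> * polar_form x y"
    using assms(1) unfolding symplectic_similitude_def by blast
  have "\<kappa> * polar_form (M *v x) (M *v y) = \<mu> * polar_form x y" for x y
    using \<mu>[of x y] assms(2)[of "M *v x" "M *v y"] by (simp add: matrix_vector_mul_assoc[symmetric])
  then have "polar_form (M *v x) (M *v y) = (\<mu> / \<kappa>) * polar_form x y" for x y
    using assms(3) by (simp add: field_simps)
  then show ?thesis
    unfolding symplectic_similitude_def by blast
qed

definition cubic_point :: "'a::field \<Rightarrow> 'a \<Rightarrow> 'a^4" where
  "cubic_point x y = vec4 (x^3) (x^2 * y) (x * y^2) (y^3)"

lemma twisted_cubic_iff: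
  "v \<in> twisted_cubic \<longleftrightarrow> (\<exists>c x y. c \<noteq> 0 \<and> (x \<noteq> 0 \<or> y \<noteq> 0) \<and> v = c *s cubic_point x y)"
proof
  assume "v \<in> twisted_cubic"
  then consider c t where "c \<noteq> 0" "v = c *s vec4 (t^3) (t^2) t 1"
    | c where "c \<noteq> 0" "v = c *s vec4 1 0 0 0"
    unfolding twisted_cubic_def by blast
  then show "\<exists>c x y. c \<noteq> 0 \<and> (x \<noteq> 0 \<or> y \<noteq> 0) \<and> v = c *s cubic_point x y"
  proof cases
    case (1 c t)
    then show ?thesis
      by (intro exI[of _ c] exI[of _ t] exI[of _ 1]) (simp add: cubic_point_def)
  next
    case (2 c)
    then show ?thesis
      by (intro exI[of _ c] exI[of _ 1] exI[of _ 0]) (simp add: cubic_point_def)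
  qed
next
  assume "\<exists>c x y. c \<noteq> 0 \<and> (x \<noteq> 0 \<or> y \<noteq> 0) \<and> v = c *s cubic_point x y"
  then obtain c x y where c: "c \<noteq> 0" "x \<noteq> 0 \<or> y \<noteq> 0" "v = c *s cubic_point x y"
    by blast
  show "v \<in> twisted_cubic"
  proof (cases "y = 0")
    case True
    with c have "v = (c * x^3) *s vec4 1 0 0 0" "c * x^3 \<noteq> 0"
      by (auto simp: cubic_point_def vec4_eq_iff)
    then show ?thesis
      unfolding twisted_cubic_def by blast
  next
    case False
    with c have "v = (c * y^3) *s vec4 ((x/y)^3) ((x/y)^2) (x/y) 1" "c * y^3 \<noteq> 0"
      by (auto simp: cubic_point_def vec4_eq_iff field_simps power2_eq_square power3_eq_cube)
    then show ?thesis
      unfolding twisted_cubic_def by blast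
  qed
qed

lemma cubic_point_in_twisted_cubic: "x \<noteq> 0 \<or> y \<noteq> 0 \<Longrightarrow> cubic_point x y \<in> twisted_cubic"
  unfolding twisted_cubic_iff by (rule exI[of _ 1]) auto

lemma twisted_cubic_quadrics:
  assumes "v \<in> twisted_cubic"
  shows "v$2^2 = v$1 * v$3" and "v$3^2 = v$2 * v$4"
proof -
  obtain c x y where "v = c *s cubic_point x y"
    using assms twisted_cubic_iff by blast
  then show "v$2^2 = v$1 * v$3" "v$3^2 = v$2 * v$4"
    by (simp_all add: cubic_point_def power2_eq_square power3_eq_cube algebra_simps)
qed

lemma cubic_point_proportional:
  assumes "p1 * q2 = p2 * q1" and "p1 \<noteq> 0 \<or> p2 \<noteq> 0"
  obtains l where "cubic_point q1 q2 = l *s cubic_point p1 p2"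
proof -
  obtain l where "q1 = l * p1" "q2 = l * p2"
  proof (cases "p1 = 0")
    case True
    with assms show ?thesis
      by (intro that[of "q2 / p2"]) auto
  next
    case False
    with assms show ?thesis
      by (intro that[of "q1 / p1"]) (auto simp: field_simps)
  qed
  then show ?thesis
    by (intro that[of "l^3"])
      (simp add: cubic_point_def vec4_eq_iff power2_eq_square power3_eq_cube algebra_simps)
qed

(* The matrix of the map that (x, y) \<mapsto> (a x + b y, c x + d y) induces on cubic_point x y. *)
definition cubic_lift :: "'a::field \<Rightarrow> 'a \<Rightarrow> 'a \<Rightarrow> 'a \<Rightarrow> 'a^4^4" where
  "cubic_lift a b c d = vec4
     (vec4 (a^3) (3*a^2*b) (3*a*b^2) (b^3))
     (vec4 (a^2*c) (a^2*d + 2*a*b*c) (2*a*b*d + b^2*c) (b^2*d))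
     (vec4 (a*c^2) (2*a*c*d + b*c^2) (a*d^2 + 2*b*c*d) (b*d^2))
     (vec4 (c^3) (3*c^2*d) (3*c*d^2) (d^3))"

lemma cubic_lift_cubic_point:
  "cubic_lift a b c d *v cubic_point x y = cubic_point (a*x + b*y) (c*x + d*y)"
  unfolding vec4_eq_iff
  by (simp add: matrix_vector_mult_4 cubic_lift_def cubic_point_def, intro conjI; algebra)

lemma polar_form_cubic_lift:
  "polar_form (cubic_lift a b c d *v x) (cubic_lift a b c d *v y) = (a*d - b*c)^3 * polar_form x y"
  by (simp add: polar_form_4 matrix_vector_mult_4 cubic_lift_def) algebra

lemma cubic_lift_mult:
  "cubic_lift a b c d ** cubic_lift a' b' c' d'
     = cubic_lift (a*a' + b*c') (a*b' + b*d') (c*a' + d*c') (c*b' + d*d')"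
  by (simp add: vec_eq_iff forall_4 matrix_matrix_mult_4 cubic_lift_def, intro conjI; algebra)

lemma invertible_cubic_lift:
  assumes "a*d - b*c \<noteq> 0"
  shows "invertible (cubic_lift a b c d)"
proof -
  define i where "i = inverse (a*d - b*c)"
  have "i * (a*d - b*c) = 1"
    using assms by (simp add: i_def)
  then have "a * (i*d) + b * (- i*c) = 1" "a * (- i*b) + b * (i*a) = 0"
    "c * (i*d) + d * (- i*c) = 0" "c * (- i*b) + d * (i*a) = 1"
    by algebra+
  then have "cubic_lift a b c d ** cubic_lift (i*d) (- i*b) (- i*c) (i*a) = cubic_lift 1 0 0 1"
    unfolding cubic_lift_mult by simp
  also have "\<dots> = mat 1"
    by (simp add: vec4_eq_iff cubic_lift_def mat_def vec4_def)
  finally show ?thesis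
    using invertible_right_inverse by blast
qed

lemma cubic_lift_preserves_twisted_cubic:
  assumes "a*d - b*c \<noteq> 0" and "v \<in> twisted_cubic"
  shows "cubic_lift a b c d *v v \<in> twisted_cubic"
proof -
  obtain k x y where k: "k \<noteq> 0" "x \<noteq> 0 \<or> y \<noteq> 0" "v = k *s cubic_point x y"
    using assms(2) twisted_cubic_iff by blast
  have "a*x + b*y \<noteq> 0 \<or> c*x + d*y \<noteq> 0"
  proof (rule ccontr)
    assume "\<not> ?thesis"
    then have "a*x + b*y = 0" "c*x + d*y = 0"
      by auto
    moreover have "(a*d - b*c) * x = d * (a*x + b*y) - b * (c*x + d*y)"
      and "(a*d - b*c) * y = a * (c*x + d*y) - c * (a*x + b*y)"
      by (simp_all add: algebra_simps)
    ultimately show False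
      using assms(1) k(2) by simp
  qed
  moreover have "cubic_lift a b c d *v v = k *s cubic_point (a*x + b*y) (c*x + d*y)"
    using k(3) by (simp add: vector_scalar_commute cubic_lift_cubic_point)
  ultimately show ?thesis
    using k(1) unfolding twisted_cubic_iff by blast
qed

lemma matrix_fixing_first_and_last_axes:
  fixes M :: "'a::comm_ring_1^4^4"
  assumes "M *v vec4 1 0 0 0 = vec4 \<alpha> 0 0 0" and "M *v vec4 0 0 0 1 = vec4 0 0 0 \<delta>"
  obtains m12 m13 m22 m23 m32 m33 m42 m43 where "\<And>x. M *v x = vec4
      (\<alpha> * x$1 + m12 * x$2 + m13 * x$3) (m22 * x$2 + m23 * x$3)
      (m32 * x$2 + m33 * x$3) (m42 * x$2 + m43 * x$3 + \<delta> * x$4)"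
proof -
  from assms have "M$1$1 = \<alpha>" "M$2$1 = 0" "M$3$1 = 0" "M$4$1 = 0"
    "M$1$4 = 0" "M$2$4 = 0" "M$3$4 = 0" "M$4$4 = \<delta>"
    by (simp_all add: vec4_eq_iff matrix_vector_mult_4)
  then show ?thesis
    by (intro that) (simp add: vec4_eq_iff matrix_vector_mult_4)
qed

lemma coefficients_if_on_twisted_cubic:
  fixes \<alpha> \<delta> m12 m13 m22 m23 m32 m33 m42 m43 :: "'a::{field,finite}"
  assumes card: "CARD('a) \<ge> 5"
    and on_cubic: "\<And>t. t \<noteq> 0 \<Longrightarrow> vec4 (\<alpha>*t^3 + m12*t^2 + m13*t) (m22*t^2 + m23*t)
                                   (m32*t^2 + m33*t) (m42*t^2 + m43*t + \<delta>) \<in> twisted_cubic"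
  shows "\<alpha> * m32 = 0" "m22^2 = \<alpha>*m33 + m12*m32" "2*m22*m23 = m12*m33 + m13*m32"
    "m23^2 = m13*m33"
    and "m23 * \<delta> = 0" "m33^2 = m22*\<delta> + m23*m43" "2*m32*m33 = m22*m43 + m23*m42"
    "m32^2 = m22*m42"
proof -
  have "(m23^2 - m13*m33) + (2*m22*m23 - m12*m33 - m13*m32)*t
          + (m22^2 - \<alpha>*m33 - m12*m32)*t^2 + (-\<alpha>*m32)*t^3 = 0"
   and "(-m23*\<delta>) + (m33^2 - m22*\<delta> - m23*m43)*t
          + (2*m32*m33 - m22*m43 - m23*m42)*t^2 + (m32^2 - m22*m42)*t^3 = 0"
    if "t \<noteq> 0" for t
  proof -
    \<comment> \<open>the two quadrics through the twisted cubic, divided by t^2 and t\<close>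
    have "(m22*t^2 + m23*t)^2 = (\<alpha>*t^3 + m12*t^2 + m13*t) * (m32*t^2 + m33*t)"
      and "(m32*t^2 + m33*t)^2 = (m22*t^2 + m23*t) * (m42*t^2 + m43*t + \<delta>)"
      using twisted_cubic_quadrics[OF on_cubic[OF that]] by simp_all
    then have "t^2 * ((m23^2 - m13*m33) + (2*m22*m23 - m12*m33 - m13*m32)*t
          + (m22^2 - \<alpha>*m33 - m12*m32)*t^2 + (-\<alpha>*m32)*t^3) = 0"
      and "t * ((-m23*\<delta>) + (m33^2 - m22*\<delta> - m23*m43)*t
          + (2*m32*m33 - m22*m43 - m23*m42)*t^2 + (m32^2 - m22*m42)*t^3) = 0"
      by algebra+
    then show
      "(m23^2 - m13*m33) + (2*m22*m23 - m12*m33 - m13*m32)*t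
          + (m22^2 - \<alpha>*m33 - m12*m32)*t^2 + (-\<alpha>*m32)*t^3 = 0"
      "(-m23*\<delta>) + (m33^2 - m22*\<delta> - m23*m43)*t
          + (2*m32*m33 - m22*m43 - m23*m42)*t^2 + (m32^2 - m22*m42)*t^3 = 0"
      using that by simp_all
  qed
  from this[THEN cubic_coeffs_eq_0_if_vanishes_off_0[OF card]]
  show "\<alpha> * m32 = 0" "m22^2 = \<alpha>*m33 + m12*m32" "2*m22*m23 = m12*m33 + m13*m32"
    "m23^2 = m13*m33" "m23 * \<delta> = 0" "m33^2 = m22*\<delta> + m23*m43"
    "2*m32*m33 = m22*m43 + m23*m42" "m32^2 = m22*m42"
    by (simp_all add: algebra_simps)
qed

lemma diagonal_coefficients:
  fixes \<alpha> \<delta> m12 m13 m22 m23 m32 m33 m42 m43 :: "'a::field"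
  assumes \<alpha>: "\<alpha> \<noteq> 0" and \<delta>: "\<delta> \<noteq> 0" and row2: "m22 \<noteq> 0 \<or> m23 \<noteq> 0"
    and "\<alpha> * m32 = 0" "m22^2 = \<alpha>*m33 + m12*m32" "2*m22*m23 = m12*m33 + m13*m32"
    "m23^2 = m13*m33"
    and "m23 * \<delta> = 0" "m33^2 = m22*\<delta> + m23*m43" "2*m32*m33 = m22*m43 + m23*m42"
    "m32^2 = m22*m42"
  shows "m12 = 0 \<and> m13 = 0 \<and> m23 = 0 \<and> m32 = 0 \<and> m42 = 0 \<and> m43 = 0 \<and> m22 * m33 = \<alpha> * \<delta>"
proof -
  have m32: "m32 = 0" and m23: "m23 = 0"
    using assms(4,8) \<alpha> \<delta> by auto
  have m22: "m22^2 = \<alpha> * m33" and m33: "m33^2 = m22 * \<delta>"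
    using assms(5,9) m32 m23 by auto
  have "m22 \<noteq> 0"
    using row2 m23 by simp
  then have "m33 \<noteq> 0"
    using m22 by auto
  have "m12 = 0 \<and> m13 = 0 \<and> m42 = 0 \<and> m43 = 0"
    using assms(6,7,10,11) m32 m23 \<open>m22 \<noteq> 0\<close> \<open>m33 \<noteq> 0\<close> by auto
  moreover have "m22 * m33 = \<alpha> * \<delta>"
  proof -
    have "(m22 * m33) * (m22 * m33) = (\<alpha> * \<delta>) * (m22 * m33)"
      using m22 m33 by (simp add: power2_eq_square algebra_simps)
    then show ?thesis
      using \<open>m22 \<noteq> 0\<close> \<open>m33 \<noteq> 0\<close> by simp
  qed
  ultimately show ?thesis
    using m32 m23 by simp
qed

lemma diagonal_if_fixes_ends_of_twisted_cubic:
  fixes M :: "'a::{field,finite}^4^4"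
  assumes card: "CARD('a) \<ge> 5" and inv: "invertible M"
    and cubic: "(*v) M ` twisted_cubic \<subseteq> twisted_cubic"
    and e1: "M *v vec4 1 0 0 0 = vec4 \<alpha> 0 0 0" and e4: "M *v vec4 0 0 0 1 = vec4 0 0 0 \<delta>"
  obtains \<beta> \<gamma> where "\<beta> * \<gamma> = \<alpha> * \<delta>"
    and "\<And>x. M *v x = vec4 (\<alpha> * x$1) (\<beta> * x$2) (\<gamma> * x$3) (\<delta> * x$4)"
proof -
  have \<alpha>: "\<alpha> \<noteq> 0" and \<delta>: "\<delta> \<noteq> 0"
    using e1 e4 invertible_matrix_vector_mult_eq_0_iff[OF inv, of "vec4 1 0 0 0"]
      invertible_matrix_vector_mult_eq_0_iff[OF inv, of "vec4 0 0 0 1"]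
    by (auto simp: vec4_eq_iff)
  obtain m12 m13 m22 m23 m32 m33 m42 m43 where M: "\<And>x. M *v x = vec4
      (\<alpha> * x$1 + m12 * x$2 + m13 * x$3) (m22 * x$2 + m23 * x$3)
      (m32 * x$2 + m33 * x$3) (m42 * x$2 + m43 * x$3 + \<delta> * x$4)"
    using matrix_fixing_first_and_last_axes[OF e1 e4] by blast
  have "surj ((*v) M)"
    using inv matrix_right_invertible_surjective[of M] unfolding invertible_def by blast
  then obtain z where "M *v z = vec4 0 1 0 0"
    by (metis surjD)
  then have row2: "m22 \<noteq> 0 \<or> m23 \<noteq> 0"
    by (auto simp: M vec4_eq_iff)
  have "vec4 (\<alpha>*t^3 + m12*t^2 + m13*t) (m22*t^2 + m23*t) (m32*t^2 + m33*t) (m42*t^2 + m43*t + \<delta>)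
      \<in> twisted_cubic" if "t \<noteq> 0" for t
  proof -
    have "M *v cubic_point t 1 \<in> twisted_cubic"
      using cubic cubic_point_in_twisted_cubic[of t 1] by auto
    then show ?thesis
      by (simp add: M cubic_point_def)
  qed
  from diagonal_coefficients[OF \<alpha> \<delta> row2 coefficients_if_on_twisted_cubic[OF card this]]
  show ?thesis
    using that[of m22 m33] by (simp add: M)
qed

lemma cubic_ends_images_independent:
  fixes M :: "'a::field^4^4"
  assumes inv: "invertible M"
    and P: "c1 \<noteq> 0" "p1 \<noteq> 0 \<or> p2 \<noteq> 0" "M *v cubic_point 1 0 = c1 *s cubic_point p1 p2"
    and Q: "M *v cubic_point 0 1 = c2 *s cubic_point q1 q2"
  shows "p1 * q2 - p2 * q1 \<noteq> 0"
proof
  assume "p1 * q2 - p2 * q1 = 0"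
  then have "p1 * q2 = p2 * q1"
    by simp
  then obtain l where "cubic_point q1 q2 = l *s cubic_point p1 p2"
    using cubic_point_proportional P(2) by blast
  then have "M *v cubic_point 0 1 = M *v ((c2 * l / c1) *s cubic_point 1 0)"
    using P Q by (simp add: vector_scalar_commute)
  then have "cubic_point (0::'a) 1 = (c2 * l / c1) *s cubic_point 1 0"
    using inj_matrix_vector_mult[OF inv] by (simp add: inj_eq)
  then show False
    by (simp add: cubic_point_def vec4_eq_iff)
qed

lemma Gq_symplectic_similitude:
  fixes M :: "'a::{field,finite}^4^4"
  assumes card: "CARD('a) \<ge> 5" and "M \<in> Gq"
  shows "symplectic_similitude M"
proof -
  have inv: "invertible M" and cubic: "(*v) M ` twisted_cubic \<subseteq> twisted_cubic"
    using assms(2) by (auto simp: Gq_def proj_fixes_def)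
  have "M *v cubic_point 1 0 \<in> twisted_cubic" "M *v cubic_point 0 1 \<in> twisted_cubic"
    using cubic cubic_point_in_twisted_cubic[of 1 0] cubic_point_in_twisted_cubic[of 0 1] by auto
  then obtain c1 p1 p2 c2 q1 q2
    where P: "c1 \<noteq> 0" "p1 \<noteq> 0 \<or> p2 \<noteq> 0" "M *v cubic_point 1 0 = c1 *s cubic_point p1 p2"
      and Q: "M *v cubic_point 0 1 = c2 *s cubic_point q1 q2"
    unfolding twisted_cubic_iff by blast
  define D where "D = p1 * q2 - p2 * q1"
  have "D \<noteq> 0"
    unfolding D_def using cubic_ends_images_independent[OF inv P Q] .
  \<comment> \<open>N moves the images of the two ends back to the ends\<close>
  define N where "N = cubic_lift q2 (- q1) (- p2) p1"
  have det: "q2 * p1 - (- q1) * (- p2) = D"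
    by (simp add: D_def algebra_simps)
  obtain \<beta> \<gamma> where "\<beta> * \<gamma> = (c1 * D^3) * (c2 * D^3)"
    and "\<And>x. (N ** M) *v x = vec4 ((c1 * D^3) * x$1) (\<beta> * x$2) (\<gamma> * x$3) ((c2 * D^3) * x$4)"
  proof (rule diagonal_if_fixes_ends_of_twisted_cubic[OF card])
    show "invertible (N ** M)"
      using invertible_mult invertible_cubic_lift inv \<open>D \<noteq> 0\<close> det unfolding N_def by metis
    have "N *v v \<in> twisted_cubic" if "v \<in> twisted_cubic" for v
      unfolding N_def using \<open>D \<noteq> 0\<close> det that by (intro cubic_lift_preserves_twisted_cubic) auto
    then show "(*v) (N ** M) ` twisted_cubic \<subseteq> twisted_cubic"
      using cubic by (auto simp: matrix_vector_mul_assoc[symmetric])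
    have "(N ** M) *v cubic_point 1 0 = c1 *s cubic_point D 0"
      and "(N ** M) *v cubic_point 0 1 = c2 *s cubic_point 0 D"
      using P(3) Q
      by (simp_all add: N_def matrix_vector_mul_assoc[symmetric] vector_scalar_commute
          cubic_lift_cubic_point D_def algebra_simps)
    then show "(N ** M) *v vec4 1 0 0 0 = vec4 (c1 * D^3) 0 0 0"
      and "(N ** M) *v vec4 0 0 0 1 = vec4 0 0 0 (c2 * D^3)"
      unfolding cubic_point_def by (simp_all add: vec4_eq_iff)
  qed (rule that)
  then have "symplectic_similitude (N ** M)"
    by (rule symplectic_similitude_diagonal)
  moreover have "polar_form (N *v x) (N *v y) = D^3 * polar_form x y" for x y
    unfolding N_def polar_form_cubic_lift det ..
  moreover have "D^3 \<noteq> 0"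
    using \<open>D \<noteq> 0\<close> by simp
  ultimately show ?thesis
    by (rule symplectic_similitude_cancel_left)
qed

lemma nullpol_linear: "nullpol (a *s u + b *s w) = a *s nullpol u + b *s nullpol w"
  by (simp add: nullpol_def vec4_eq_iff algebra_simps)

lemma nullpol_eq_iff: "(3::'a::field) \<noteq> 0 \<Longrightarrow> nullpol x = nullpol y \<longleftrightarrow> x = (y::'a^4)"
  by (auto simp: nullpol_def vec4_eq_iff)

lemma nullpol_zero [simp]: "nullpol 0 = 0"
  by (simp add: nullpol_def vec4_eq_iff)

lemma indep2_nonzero:
  assumes "indep2 u w"
  shows "u \<noteq> 0" and "w \<noteq> 0"
  using assms[unfolded indep2_def, rule_format, of 1 0] assms[unfolded indep2_def, rule_format, of 0 1]
  by auto

lemma in_span_if_polar_to_polar_line: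
  fixes u w x :: "'a::field^4"
  assumes three: "(3::'a) \<noteq> 0" and indep: "indep2 u w"
    and polar: "\<And>y. polar_form u y = 0 \<Longrightarrow> polar_form w y = 0 \<Longrightarrow> polar_form x y = 0"
  shows "\<exists>a b. x = a *s u + b *s w"
proof -
  have "a = 0 \<and> b = 0" if "a *s nullpol u + b *s nullpol w = 0" for a b
    using that indep three nullpol_eq_iff[of "a *s u + b *s w" 0]
    unfolding indep2_def nullpol_linear by simp
  then obtain a b where "nullpol x = a *s nullpol u + b *s nullpol w"
    using in_span_pair_if_annihilator_le[of "nullpol u" "nullpol w" "nullpol x"] polar
    unfolding polar_form_def dotp_def by blast
  then show ?thesis
    using three by (auto simp: nullpol_linear[symmetric] nullpol_eq_iff)
qed

lemma mem_line_through_iff: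
  assumes "indep2 u w"
  shows "x \<in> line_through u w \<longleftrightarrow> x \<noteq> 0 \<and> (\<exists>a b. x = a *s u + b *s w)"
proof
  assume "x \<in> line_through u w"
  then obtain a b where "x = a *s u + b *s w" and "a \<noteq> 0 \<or> b \<noteq> 0"
    unfolding line_through_def by blast
  then show "x \<noteq> 0 \<and> (\<exists>a b. x = a *s u + b *s w)"
    using assms unfolding indep2_def by auto
next
  assume "x \<noteq> 0 \<and> (\<exists>a b. x = a *s u + b *s w)"
  then obtain a b where "x = a *s u + b *s w" and "x \<noteq> 0"
    by blast
  moreover from this have "a \<noteq> 0 \<or> b \<noteq> 0"
    by auto
  ultimately show "x \<in> line_through u w"
    unfolding line_through_def by blast
qed

lemma mem_polar_line_iff:
  "x \<in> polar_line u w \<longleftrightarrow> x \<noteq> 0 \<and> polar_form u x = 0 \<and> polar_form w x = 0"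
  unfolding polar_line_def plane_def polar_form_def by blast

lemma proj_fixes_if_image_subset:
  fixes M :: "'a::{field,finite}^4^4"
  assumes "invertible M" and "(*v) M ` S \<subseteq> S"
  shows "proj_fixes M S"
proof -
  have "card ((*v) M ` S) = card S"
    using inj_matrix_vector_mult[OF assms(1)] by (simp add: card_image inj_on_subset)
  then show ?thesis
    unfolding proj_fixes_def using assms(2) by (intro card_subset_eq) auto
qed

lemma polar_form_line_through_polar_line:
  assumes "indep2 u w" and "x \<in> line_through u w" and "y \<in> polar_line u w"
  shows "polar_form x y = 0"
proof -
  obtain a b where "x = a *s u + b *s w"
    using assms(2) mem_line_through_iff[OF assms(1)] by blast
  then show ?thesis
    using assms(3) by (simp add: mem_polar_line_iff polar_form_linear_left)
qed

lemma base_points_mem_line_through: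
  assumes "indep2 u w"
  shows "u \<in> line_through u w" and "w \<in> line_through u w"
proof -
  have "u = 1 *s u + 0 *s w" and "w = 0 *s u + 1 *s w"
    by simp_all
  then show "u \<in> line_through u w" and "w \<in> line_through u w"
    using indep2_nonzero[OF assms] unfolding mem_line_through_iff[OF assms] by blast+
qed

lemma symplectic_similitude_fixes_polar_line:
  fixes M :: "'a::{field,finite}^4^4"
  assumes indep: "indep2 u w" and inv: "invertible M" and "symplectic_similitude M"
    and fix_line: "proj_fixes M (line_through u w)"
  shows "proj_fixes M (polar_line u w)"
proof (rule proj_fixes_if_image_subset[OF inv], clarify)
  obtain \<mu> where \<mu>: "\<And>x y. polar_form (M *v x) (M *v y) = \<mu> * polar_form x y"
    using assms(3) unfolding symplectic_similitude_def by blast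
  fix y assume y: "y \<in> polar_line u w"
  have "polar_form z (M *v y) = 0" if "z \<in> line_through u w" for z
  proof -
    from that fix_line obtain x where "x \<in> line_through u w" and "z = M *v x"
      unfolding proj_fixes_def by (metis imageE)
    then show ?thesis
      using \<mu> polar_form_line_through_polar_line[OF indep _ y] by simp
  qed
  moreover have "M *v y \<noteq> 0"
    using y invertible_matrix_vector_mult_eq_0_iff[OF inv] by (simp add: mem_polar_line_iff)
  ultimately show "M *v y \<in> polar_line u w"
    using base_points_mem_line_through[OF indep] by (simp add: mem_polar_line_iff)
qed

lemma symplectic_similitude_fixes_line:
  fixes M :: "'a::{field,finite}^4^4"
  assumes three: "(3::'a) \<noteq> 0" and indep: "indep2 u w"
    and inv: "invertible M" and "symplectic_similitude M"
    and fix_polar: "proj_fixes M (polar_line u w)"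
  shows "proj_fixes M (line_through u w)"
proof (rule proj_fixes_if_image_subset[OF inv], clarify)
  obtain \<mu> where \<mu>: "\<And>x y. polar_form (M *v x) (M *v y) = \<mu> * polar_form x y"
    using assms(4) unfolding symplectic_similitude_def by blast
  fix x assume x: "x \<in> line_through u w"
  have "\<exists>a b. M *v x = a *s u + b *s w"
  proof (rule in_span_if_polar_to_polar_line[OF three indep])
    fix y assume "polar_form u y = 0" "polar_form w y = 0"
    show "polar_form (M *v x) y = 0"
    proof (cases "y = 0")
      case False
      with \<open>polar_form u y = 0\<close> \<open>polar_form w y = 0\<close> have "y \<in> polar_line u w"
        by (simp add: mem_polar_line_iff)
      with fix_polar obtain y' where "y' \<in> polar_line u w" and "y = M *v y'"
        unfolding proj_fixes_def by (metis imageE)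
      then show ?thesis
        using \<mu> polar_form_line_through_polar_line[OF indep x] by simp
    qed simp
  qed
  moreover have "M *v x \<noteq> 0"
    using x invertible_matrix_vector_mult_eq_0_iff[OF inv] by (simp add: mem_line_through_iff[OF indep])
  ultimately show "M *v x \<in> line_through u w"
    by (simp add: mem_line_through_iff[OF indep])
qed

theorem lemma4p3:
  fixes u w :: "'a::{field, finite} ^ 4"
  assumes "\<exists>p k. prime p \<and> k > 0 \<and> CARD('a) = p ^ k"
    and "CARD('a) \<ge> 5"
    and "CARD('a) mod 3 \<noteq> 0"
    and "indep2 u w"
  shows "{M \<in> Gq. proj_fixes M (line_through u w)}
       = {M \<in> Gq. proj_fixes M (polar_line u w)}"
proof -
  have "(3::'a) \<noteq> 0"
    using assms(3) by (rule three_neq_zero_if_card_not_dvd)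
  moreover have "invertible M" if "M \<in> Gq" for M :: "'a^4^4"
    using that by (simp add: Gq_def)
  moreover have "symplectic_similitude M" if "M \<in> Gq" for M :: "'a^4^4"
    using Gq_symplectic_similitude[OF assms(2) that] .
  ultimately show ?thesis
    using symplectic_similitude_fixes_polar_line[OF assms(4)]
      symplectic_similitude_fixes_line[OF _ assms(4)] by blast
qed

end
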